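(* Let $n\geq1$, $0<\sigma<2$ and $0<\gamma<1$. For $y>0$ let $P^\sigma_y(x)=(I(\sigma))^{-1}y^\sigma(y^2+|x|^2)^{-(n+\sigma)/2}$, $x\in\mathbb{R}^n$, where $I(\sigma)=\omega_n\int_0^\infty(1+\rho^2)^{-(n+\sigma)/2}\rho^{n-1}d\rho$ and $\omega_n$ is the surface area of the unit sphere. For $x\in\mathbb{R}^n\setminus\{0\}$ and $y>0$ set $\mathfrak{s}_\gamma(x,y,\sigma)=\sup_{z\in B(x,\gamma|x|)}P^\sigma_y(z)$ and $\mathfrak{i}_\gamma(x,y,\sigma)=\inf_{z\in B(x,\gamma|x|)}P^\sigma_y(z)$. Then \[\frac{\mathfrak{s}_\gamma(x,y,\sigma)}{\mathfrak{i}_\gamma(x,y,\sigma)}<\left(\frac{1+\gamma}{1-\gamma}\right)^{n+\sigma}\] for all $x\in\mathbb{R}^n\setminus\{0\}$ and $y>0$, and \[\sup_{x\neq0,\,y>0}\frac{\mathfrak{s}_\gamma(x,y,\sigma)}{\mathfrak{i}_\gamma(x,y,\sigma)}=\left(\frac{1+\gamma}{1-\gamma}\right)^{n+\sigma}.\] *)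

theory Defs
  imports "HOL-Analysis.Analysis"
begin

definition sphere_area :: "'n::finite itself \<Rightarrow> real" where
  "sphere_area _ = real CARD('n) * measure lborel (ball (0::real^'n) 1)"

definition I_const :: "'n::finite itself \<Rightarrow> real \<Rightarrow> real" where
  "I_const T \<sigma> = sphere_area T *
     (LBINT \<rho>:{0<..}. (1 + \<rho>\<^sup>2) powr (-(real CARD('n) + \<sigma>) / 2) * \<rho> ^ (CARD('n) - 1))"

definition poisson_kernel :: "real \<Rightarrow> real \<Rightarrow> real^'n \<Rightarrow> real" where
  "poisson_kernel \<sigma> y x = inverse (I_const TYPE('n) \<sigma>) * y powr \<sigma> *
     (y\<^sup>2 + (norm x)\<^sup>2) powr (-(real CARD('n) + \<sigma>) / 2)"

definition sup_ker :: "real \<Rightarrow> real^'n \<Rightarrow> real \<Rightarrow> real \<Rightarrow> real" where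
  "sup_ker \<gamma> x y \<sigma> = (SUP z\<in>ball x (\<gamma> * norm x). poisson_kernel \<sigma> y z)"

definition inf_ker :: "real \<Rightarrow> real^'n \<Rightarrow> real \<Rightarrow> real \<Rightarrow> real" where
  "inf_ker \<gamma> x y \<sigma> = (INF z\<in>ball x (\<gamma> * norm x). poisson_kernel \<sigma> y z)"

end

theory Submission
  imports Defs
begin

text \<open>The kernel \<open>P\<^sup>\<sigma>\<^sub>y(z)\<close> is a decreasing function of \<open>|z|\<close>, and the norms of the points of
  \<open>B(x, \<gamma>|x|)\<close> fill exactly the interval \<open>((1 - \<gamma>)|x|, (1 + \<gamma>)|x|)\<close>. Hence the supremum and
  the infimum are the kernel values at the ends of this interval, and their quotient is
  \<open>((y\<^sup>2 + (1 + \<gamma>)\<^sup>2|x|\<^sup>2) / (y\<^sup>2 + (1 - \<gamma>)\<^sup>2|x|\<^sup>2))\<^bsup>(n + \<sigma>)/2\<^esup>\<close>. The base is a mediant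
  of \<open>(1 + \<gamma>)\<^sup>2 / (1 - \<gamma>)\<^sup>2\<close> and \<open>1\<close>, hence strictly below the former, and it tends to it as
  \<open>y / |x| \<rightarrow> 0\<close>.\<close>

lemma norm_image_ball:
  fixes c :: "'a::real_normed_vector"
  assumes "0 < r" "r \<le> norm c"
  shows "norm ` ball c r = {norm c - r<..<norm c + r}"
proof
  show "norm ` ball c r \<subseteq> {norm c - r<..<norm c + r}"
  proof (rule image_subsetI)
    fix z assume "z \<in> ball c r"
    then show "norm z \<in> {norm c - r<..<norm c + r}"
      using norm_triangle_ineq3[of c z] by (auto simp: dist_norm abs_less_iff)
  qed
next
  have c: "c \<noteq> 0" using assms by auto
  show "{norm c - r<..<norm c + r} \<subseteq> norm ` ball c r"
  proof
    fix t assume t: "t \<in> {norm c - r<..<norm c + r}"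
    then have "t \<ge> 0" using assms by auto
    have "c - (t / norm c) *\<^sub>R c = (1 - t / norm c) *\<^sub>R c" by (simp add: algebra_simps)
    also have "norm \<dots> = \<bar>(1 - t / norm c) * norm c\<bar>" by (simp add: abs_mult)
    also have "(1 - t / norm c) * norm c = norm c - t" using c by (simp add: field_simps)
    finally have "dist c ((t / norm c) *\<^sub>R c) = \<bar>norm c - t\<bar>" by (simp add: dist_norm)
    moreover have "norm ((t / norm c) *\<^sub>R c) = t" using c \<open>t \<ge> 0\<close> by simp
    ultimately show "t \<in> norm ` ball c r" using t
      by (intro image_eqI[of _ _ "(t / norm c) *\<^sub>R c"]) (auto simp: abs_less_iff)
  qed
qed

lemma SUP_greaterThanLessThan_antimono:
  fixes f :: "real \<Rightarrow> real"
  assumes "a < b" "antimono_on {a..b} f" "continuous_on {a..b} f"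
  shows "(SUP t\<in>{a<..<b}. f t) = f a"
proof (rule antisym)
  show "(SUP t\<in>{a<..<b}. f t) \<le> f a"
    using assms by (intro cSUP_least) (auto simp: monotone_on_def)
  have "(f \<longlongrightarrow> f a) (at_right a)"
    using assms continuous_on_Icc_at_rightD by blast
  moreover have "\<forall>\<^sub>F t in at_right a. f t \<le> (SUP t\<in>{a<..<b}. f t)"
    using eventually_at_right_real[OF assms(1)]
  proof eventually_elim
    case (elim t)
    have "bdd_above (f ` {a<..<b})"
      using assms by (intro bdd_aboveI2[where M = "f a"]) (auto simp: monotone_on_def)
    then show ?case using elim by (intro cSUP_upper)
  qed
  ultimately show "f a \<le> (SUP t\<in>{a<..<b}. f t)"
    by (rule tendsto_upperbound) simp
qed

lemma INF_greaterThanLessThan_antimono: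
  fixes f :: "real \<Rightarrow> real"
  assumes "a < b" "antimono_on {a..b} f" "continuous_on {a..b} f"
  shows "(INF t\<in>{a<..<b}. f t) = f b"
proof (rule antisym)
  show "f b \<le> (INF t\<in>{a<..<b}. f t)"
    using assms by (intro cINF_greatest) (auto simp: monotone_on_def)
  have "(f \<longlongrightarrow> f b) (at_left b)"
    using assms continuous_on_Icc_at_leftD by blast
  moreover have "\<forall>\<^sub>F t in at_left b. (INF t\<in>{a<..<b}. f t) \<le> f t"
    using eventually_at_left_real[OF assms(1)]
  proof eventually_elim
    case (elim t)
    have "bdd_below (f ` {a<..<b})"
      using assms by (intro bdd_belowI2[where m = "f b"]) (auto simp: monotone_on_def)
    then show ?case using elim by (intro cINF_lower)
  qed
  ultimately show "(INF t\<in>{a<..<b}. f t) \<le> f b"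
    by (rule tendsto_lowerbound) simp
qed

lemma SUP_ball_antimono_norm:
  fixes c :: "'a::real_normed_vector" and g :: "real \<Rightarrow> real"
  assumes "0 < r" "r \<le> norm c" "antimono_on {0..} g" "continuous_on {0..} g"
  shows "(SUP z\<in>ball c r. g (norm z)) = g (norm c - r)"
proof -
  have sub: "{norm c - r..norm c + r} \<subseteq> {0..}" using assms(2) by auto
  have "norm c - r < norm c + r" using assms(1) by simp
  then have "(SUP t\<in>{norm c - r<..<norm c + r}. g t) = g (norm c - r)"
    by (rule SUP_greaterThanLessThan_antimono[OF _ monotone_on_subset[OF assms(3) sub]
          continuous_on_subset[OF assms(4) sub]])
  then show ?thesis by (simp add: image_image norm_image_ball[OF assms(1,2), symmetric])
qed

lemma INF_ball_antimono_norm: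
  fixes c :: "'a::real_normed_vector" and g :: "real \<Rightarrow> real"
  assumes "0 < r" "r \<le> norm c" "antimono_on {0..} g" "continuous_on {0..} g"
  shows "(INF z\<in>ball c r. g (norm z)) = g (norm c + r)"
proof -
  have sub: "{norm c - r..norm c + r} \<subseteq> {0..}" using assms(2) by auto
  have "norm c - r < norm c + r" using assms(1) by simp
  then have "(INF t\<in>{norm c - r<..<norm c + r}. g t) = g (norm c + r)"
    by (rule INF_greaterThanLessThan_antimono[OF _ monotone_on_subset[OF assms(3) sub]
          continuous_on_subset[OF assms(4) sub]])
  then show ?thesis by (simp add: image_image norm_image_ball[OF assms(1,2), symmetric])
qed

lemma set_integrable_Poisson_radial_weight:
  fixes N :: nat and \<sigma> :: real
  assumes "0 < \<sigma>" "1 \<le> N"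
  shows "set_integrable lborel {0<..} (\<lambda>\<rho>. (1 + \<rho>\<^sup>2) powr (-(real N + \<sigma>) / 2) * \<rho> ^ (N - 1))"
    (is "set_integrable _ _ ?f")
proof -
  have "set_integrable lborel {0..1} ?f"
    by (intro borel_integrable_atLeastAtMost' continuous_intros) (auto simp: add_nonneg_eq_0_iff)
  then have near_0: "set_integrable lborel {0<..1} ?f"
    by (rule set_integrable_subset) auto
  have tail_bound: "?f \<rho> \<le> \<rho> powr (- \<sigma> - 1)" if "1 \<le> \<rho>" for \<rho>
  proof -
    have "(1 + \<rho>\<^sup>2) powr (-(real N + \<sigma>) / 2) \<le> (\<rho>\<^sup>2) powr (-(real N + \<sigma>) / 2)"
      using that assms by (intro powr_mono2') auto
    also have "\<dots> = \<rho> powr (2 * (-(real N + \<sigma>) / 2))"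
      using that by (simp add: powr_powr flip: powr_numeral)
    also have "\<dots> = \<rho> powr (-(real N + \<sigma>))" by (rule arg_cong[where f = "(powr) \<rho>"]) simp
    finally have decay: "(1 + \<rho>\<^sup>2) powr (-(real N + \<sigma>) / 2) \<le> \<rho> powr (-(real N + \<sigma>))" .
    have "\<rho> ^ (N - 1) = \<rho> powr (real N - 1)"
      using that assms by (simp add: of_nat_diff flip: powr_realpow)
    then have "?f \<rho> \<le> \<rho> powr (-(real N + \<sigma>)) * \<rho> powr (real N - 1)"
      using decay that by (simp add: mult_right_mono)
    also have "\<dots> = \<rho> powr (- \<sigma> - 1)"
      using that by (simp flip: powr_add)
    finally show ?thesis .
  qed
  have "(\<lambda>t. t powr (- \<sigma> - 1)) integrable_on {1..}"
    using has_integral_powr_to_inf[of "- \<sigma> - 1" 1] assms unfolding integrable_on_def by auto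
  then have "set_integrable lebesgue {1..} (\<lambda>t. t powr (- \<sigma> - 1))"
    by (subst absolutely_integrable_on_iff_nonneg) auto
  then have "set_integrable lborel {1..} (\<lambda>t::real. t powr (- \<sigma> - 1))"
    unfolding set_integrable_def by (subst (asm) integrable_completion) auto
  moreover have "set_borel_measurable lborel {1..} ?f"
    unfolding set_borel_measurable_def by measurable
  ultimately have tail: "set_integrable lborel {1..} ?f"
    by (rule set_integrable_bound) (use tail_bound in \<open>auto intro!: AE_I2\<close>)
  have "set_integrable lborel ({0<..1} \<union> {1..}) ?f"
    by (intro set_integrable_Un near_0 tail) auto
  also have "{0<..1} \<union> {1..} = {0::real<..}" by auto
  finally show ?thesis .
qed

lemma Poisson_radial_weight_integral_pos:
  fixes N :: nat and \<sigma> :: real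
  assumes "0 < \<sigma>" "1 \<le> N"
  shows "0 < (LBINT \<rho>:{0<..}. (1 + \<rho>\<^sup>2) powr (-(real N + \<sigma>) / 2) * \<rho> ^ (N - 1))"
    (is "0 < (LBINT \<rho>:_. ?f \<rho>)")
proof -
  have pos: "0 < ?f \<rho>" if "0 < \<rho>" for \<rho>
    using that by (simp add: add_nonneg_eq_0_iff)
  have int: "integrable lborel (\<lambda>\<rho>. indicator {0<..} \<rho> * ?f \<rho>)"
    using set_integrable_Poisson_radial_weight[OF assms] by (simp add: set_integrable_def)
  have "0 \<le> (LBINT \<rho>:{0<..}. ?f \<rho>)"
    unfolding set_lebesgue_integral_def
    using pos by (intro integral_nonneg_AE) (auto simp: indicator_def less_imp_le)
  moreover have "{0::real<..} \<notin> null_sets lborel"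
  proof
    assume "{0::real<..} \<in> null_sets lborel"
    then have "{0::real<..<1} \<in> null_sets lborel"
      by (rule null_sets_subset) auto
    then show False by auto
  qed
  then have "(LBINT \<rho>:{0<..}. indicator {0<..} \<rho> * ?f \<rho>) \<noteq> 0"
    using null_if_pos_func_has_zero_int[OF int, of "{0<..}"] pos by auto
  then have "(LBINT \<rho>:{0<..}. ?f \<rho>) \<noteq> 0"
    by (simp add: set_lebesgue_integral_def mult.assoc[symmetric] mult_indicator_subset)
  ultimately show ?thesis by linarith
qed

lemma I_const_pos:
  assumes "0 < \<sigma>"
  shows "0 < I_const TYPE('n::finite) \<sigma>"
proof -
  have "1 \<le> CARD('n)" by (simp add: Suc_leI)
  moreover have "0 < sphere_area TYPE('n)"
    unfolding sphere_area_def using content_ball_pos[of 1 "0::real^'n"] by simp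
  ultimately show ?thesis
    unfolding I_const_def using Poisson_radial_weight_integral_pos[OF assms] by simp
qed

lemma poisson_kernel_radial_antimono:
  assumes "0 < \<sigma>" "0 < y"
  obtains g where "poisson_kernel \<sigma> y = (\<lambda>z::real^'n. g (norm z))"
    "antimono_on {0..} g" "continuous_on {0..} g"
proof
  define e where "e = -(real CARD('n) + \<sigma>) / 2"
  define g where "g t = inverse (I_const TYPE('n) \<sigma>) * y powr \<sigma> * (y\<^sup>2 + t\<^sup>2) powr e" for t
  show "poisson_kernel \<sigma> y = (\<lambda>z::real^'n. g (norm z))"
    by (simp add: fun_eq_iff poisson_kernel_def g_def e_def)
  have "e \<le> 0" using assms(1) by (simp add: e_def)
  moreover have "0 \<le> inverse (I_const TYPE('n) \<sigma>) * y powr \<sigma>"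
    using I_const_pos[OF assms(1), where 'n = 'n] by simp
  ultimately show "antimono_on {0..} g"
    unfolding g_def using assms(2)
    by (intro monotone_onI mult_left_mono powr_mono2' add_left_mono power_mono)
       (auto intro: add_pos_nonneg)
  show "continuous_on {0..} g"
    unfolding g_def using assms(2) by (intro continuous_intros) (auto intro: add_pos_nonneg)
qed

lemma sup_ker_eq:
  fixes x :: "real^'n"
  assumes "0 < \<sigma>" "0 < \<gamma>" "\<gamma> \<le> 1" "x \<noteq> 0" "0 < y"
  shows "sup_ker \<gamma> x y \<sigma> = poisson_kernel \<sigma> y ((1 - \<gamma>) *\<^sub>R x)"
proof -
  obtain g where g: "poisson_kernel \<sigma> y = (\<lambda>z::real^'n. g (norm z))"
    "antimono_on {0..} g" "continuous_on {0..} g"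
    using poisson_kernel_radial_antimono[OF assms(1,5)] by blast
  have "sup_ker \<gamma> x y \<sigma> = (SUP z\<in>ball x (\<gamma> * norm x). g (norm z))"
    unfolding sup_ker_def g(1) ..
  also have "\<dots> = g (norm x - \<gamma> * norm x)"
    using assms by (intro SUP_ball_antimono_norm g(2,3)) auto
  finally show ?thesis
    using assms(3) by (simp add: g(1) left_diff_distrib)
qed

lemma inf_ker_eq:
  fixes x :: "real^'n"
  assumes "0 < \<sigma>" "0 < \<gamma>" "\<gamma> \<le> 1" "x \<noteq> 0" "0 < y"
  shows "inf_ker \<gamma> x y \<sigma> = poisson_kernel \<sigma> y ((1 + \<gamma>) *\<^sub>R x)"
proof -
  obtain g where g: "poisson_kernel \<sigma> y = (\<lambda>z::real^'n. g (norm z))"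
    "antimono_on {0..} g" "continuous_on {0..} g"
    using poisson_kernel_radial_antimono[OF assms(1,5)] by blast
  have "inf_ker \<gamma> x y \<sigma> = (INF z\<in>ball x (\<gamma> * norm x). g (norm z))"
    unfolding inf_ker_def g(1) ..
  also have "\<dots> = g (norm x + \<gamma> * norm x)"
    using assms by (intro INF_ball_antimono_norm g(2,3)) auto
  finally show ?thesis
    using assms(2) by (simp add: g(1) distrib_right)
qed

lemma poisson_kernel_divide:
  fixes u v :: "real^'n"
  assumes "0 < \<sigma>" "0 < y"
  shows "poisson_kernel \<sigma> y u / poisson_kernel \<sigma> y v
    = ((y\<^sup>2 + (norm v)\<^sup>2) / (y\<^sup>2 + (norm u)\<^sup>2)) powr ((real CARD('n) + \<sigma>) / 2)"
proof -
  have "0 < I_const TYPE('n) \<sigma>" by (rule I_const_pos[OF assms(1)])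
  moreover have "0 < y\<^sup>2 + (norm u)\<^sup>2" "0 < y\<^sup>2 + (norm v)\<^sup>2"
    using assms(2) by (simp_all add: add_pos_nonneg)
  ultimately show ?thesis
    unfolding poisson_kernel_def using assms(2)
    by (simp add: powr_divide divide_powr_uminus minus_divide_left add.commute)
qed

lemma add_mult_divide_add_mult_less:
  fixes a b s y :: real
  assumes "0 < y" "0 \<le> s" "0 < b" "b < a"
  shows "(y + a * s) / (y + b * s) < a / b"
proof -
  have "(y + a * s) * b < a * (y + b * s)"
    using assms by (simp add: algebra_simps mult_strict_right_mono)
  then show ?thesis
    using assms by (simp add: divide_simps add_pos_nonneg)
qed

lemma cSUP_eq_tendsto:
  fixes f :: "'a \<Rightarrow> real"
  assumes "\<And>x. x \<in> S \<Longrightarrow> f x \<le> b" "F \<noteq> bot"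
    "\<forall>\<^sub>F t in F. h t \<in> S" "((\<lambda>t. f (h t)) \<longlongrightarrow> b) F"
  shows "(SUP x\<in>S. f x) = b"
proof (rule antisym)
  have "S \<noteq> {}" using eventually_happens[OF assms(3)] assms(2) by auto
  then show "(SUP x\<in>S. f x) \<le> b" using assms(1) by (rule cSUP_least)
  have "bdd_above (f ` S)" using assms(1) by (rule bdd_aboveI2)
  then have "\<forall>\<^sub>F t in F. f (h t) \<le> (SUP x\<in>S. f x)"
    using assms(3) by (auto elim: eventually_mono intro: cSUP_upper)
  with assms(4,2) show "b \<le> (SUP x\<in>S. f x)" by (intro tendsto_upperbound)
qed

definition kernel_ratio :: "real \<Rightarrow> real \<Rightarrow> real \<Rightarrow> real \<Rightarrow> real" where
  "kernel_ratio \<gamma> p y r = ((y\<^sup>2 + ((1 + \<gamma>) * r)\<^sup>2) / (y\<^sup>2 + ((1 - \<gamma>) * r)\<^sup>2)) powr p"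

lemma sup_ker_divide_inf_ker:
  fixes x :: "real^'n"
  assumes "0 < \<sigma>" "0 < \<gamma>" "\<gamma> \<le> 1" "x \<noteq> 0" "0 < y"
  shows "sup_ker \<gamma> x y \<sigma> / inf_ker \<gamma> x y \<sigma>
    = kernel_ratio \<gamma> ((real CARD('n) + \<sigma>) / 2) y (norm x)"
  using assms by (simp add: kernel_ratio_def sup_ker_eq inf_ker_eq poisson_kernel_divide)

lemma kernel_ratio_less:
  assumes "0 < \<gamma>" "\<gamma> < 1" "0 < p" "0 < y"
  shows "kernel_ratio \<gamma> p y r < ((1 + \<gamma>) / (1 - \<gamma>)) powr (2 * p)"
proof -
  have "(y\<^sup>2 + ((1 + \<gamma>) * r)\<^sup>2) / (y\<^sup>2 + ((1 - \<gamma>) * r)\<^sup>2) < ((1 + \<gamma>) / (1 - \<gamma>))\<^sup>2"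
    using add_mult_divide_add_mult_less[of "y\<^sup>2" "r\<^sup>2" "(1 - \<gamma>)\<^sup>2" "(1 + \<gamma>)\<^sup>2"] assms
    by (simp add: power_mult_distrib mult.commute power_strict_mono power_divide)
  then have "kernel_ratio \<gamma> p y r < (((1 + \<gamma>) / (1 - \<gamma>))\<^sup>2) powr p"
    unfolding kernel_ratio_def using assms by (intro powr_less_mono2) (auto simp: add_pos_nonneg)
  also have "\<dots> = ((1 + \<gamma>) / (1 - \<gamma>)) powr (2 * p)"
    using assms by (simp add: powr_powr flip: powr_numeral)
  finally show ?thesis .
qed

lemma kernel_ratio_tendsto:
  assumes "0 < \<gamma>" "\<gamma> < 1"
  shows "((\<lambda>y. kernel_ratio \<gamma> p y 1) \<longlongrightarrow> ((1 + \<gamma>) / (1 - \<gamma>)) powr (2 * p)) (at_right 0)"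
proof -
  have "isCont (\<lambda>y. kernel_ratio \<gamma> p y 1) 0"
    unfolding kernel_ratio_def using assms by (intro continuous_intros) (auto simp: add_pos_nonneg)
  then have "((\<lambda>y. kernel_ratio \<gamma> p y 1) \<longlongrightarrow> kernel_ratio \<gamma> p 0 1) (at_right 0)"
    unfolding isCont_def by (rule tendsto_mono[OF at_le, rotated]) simp
  also have "kernel_ratio \<gamma> p 0 1 = (((1 + \<gamma>) / (1 - \<gamma>))\<^sup>2) powr p"
    by (simp add: kernel_ratio_def power_divide)
  also have "\<dots> = ((1 + \<gamma>) / (1 - \<gamma>)) powr (2 * p)"
    using assms by (simp add: powr_powr flip: powr_numeral)
  finally show ?thesis .
qed

theorem proposition3p1:
  fixes \<sigma> \<gamma> :: real
  assumes "0 < \<sigma>" "\<sigma> < 2" "0 < \<gamma>" "\<gamma> < 1"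
  shows "(\<forall>(x::real^'n) y. x \<noteq> 0 \<and> 0 < y \<longrightarrow>
            sup_ker \<gamma> x y \<sigma> / inf_ker \<gamma> x y \<sigma>
              < ((1 + \<gamma>) / (1 - \<gamma>)) powr (real CARD('n) + \<sigma>))
       \<and> (SUP p\<in>{(x::real^'n, y). x \<noteq> 0 \<and> 0 < y}.
            sup_ker \<gamma> (fst p) (snd p) \<sigma> / inf_ker \<gamma> (fst p) (snd p) \<sigma>)
           = ((1 + \<gamma>) / (1 - \<gamma>)) powr (real CARD('n) + \<sigma>)"
proof -
  define p where "p = (real CARD('n) + \<sigma>) / 2"
  have p: "0 < p" "2 * p = real CARD('n) + \<sigma>" using assms(1) by (simp_all add: p_def add_pos_pos)
  have ratio: "sup_ker \<gamma> x y \<sigma> / inf_ker \<gamma> x y \<sigma> = kernel_ratio \<gamma> p y (norm x)"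
    if "x \<noteq> 0" "0 < y" for x :: "real^'n" and y
    using that assms unfolding p_def by (simp add: sup_ker_divide_inf_ker)
  have less: "sup_ker \<gamma> x y \<sigma> / inf_ker \<gamma> x y \<sigma> < ((1 + \<gamma>) / (1 - \<gamma>)) powr (2 * p)"
    if "x \<noteq> 0" "0 < y" for x :: "real^'n" and y
    using ratio[OF that] kernel_ratio_less[OF assms(3,4) p(1) that(2)] by simp
  define e :: "real^'n" where "e = axis undefined 1"
  have e: "e \<noteq> 0" "norm e = 1" by (simp_all add: e_def axis_eq_0_iff)
  have "\<forall>\<^sub>F y in at_right 0. kernel_ratio \<gamma> p y 1 = sup_ker \<gamma> e y \<sigma> / inf_ker \<gamma> e y \<sigma>"
    using eventually_at_right_less by (rule eventually_mono) (simp add: ratio e)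
  with kernel_ratio_tendsto[OF assms(3,4)]
  have "((\<lambda>y. sup_ker \<gamma> e y \<sigma> / inf_ker \<gamma> e y \<sigma>) \<longlongrightarrow> ((1 + \<gamma>) / (1 - \<gamma>)) powr (2 * p))
      (at_right 0)"
    by (rule Lim_transform_eventually)
  moreover have "\<forall>\<^sub>F y in at_right 0. (e, y) \<in> {(x::real^'n, y::real). x \<noteq> 0 \<and> 0 < y}"
    using eventually_at_right_less by (rule eventually_mono) (simp add: e)
  ultimately show ?thesis
    using less unfolding p(2)
    by (auto intro!: cSUP_eq_tendsto[where h = "\<lambda>y. (e, y)" and F = "at_right 0"] less_imp_le)
qed

end
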